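(* Let $a>0$, $b\ge0$, and assume $A:=a+\beta-1<0$. Then $$\limsup_{N\to\infty}N^{-\chi\beta+bA}\,\mathbb E\Big[\sum_{k=1}^N w_{I^N_k}^a\,\mathbf 1\{w_{I^N_k}\ge N^{-b}\}\Big]\le(1-\beta)\frac{1}{|A|}.$$ The same holds if $I^N$ is replaced by $J^N$, $N$ i.i.d. draws with replacement from $\{1,\dots,\lceil N^\gamma\rceil\}$ with $\mathbb P(J^N_k=i\mid\Xi)=w_i^\beta/\sum_{j=1}^{\lceil N^\gamma\rceil}w_j^\beta$.
   Context: Fix $\gamma>1$, $\beta\in(0,1)$, $\chi=\frac{1-\gamma(1-\beta)}{\beta}$. $\Xi$ is a Poisson point process on $(0,\infty)$ with intensity $x^{-2}dx$ and atoms $w_1>w_2>\cdots$. Conditionally on $\Xi$, $I^N=(I^N_1,\dots,I^N_N)$ are $N$ indices sampled without replacement from $\{1,\dots,\lceil N^\gamma\rceil\}$ with weights $w_i^\beta$ (each successive draw picks a not-yet-drawn index $i$ with probability proportional to $w_i^\beta$ among the not-yet-drawn ones). *)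

theory Defs
  imports "HOL-Probability.Probability"
begin

text \<open>Poisson point process on (0,inf) with intensity x^-2 dx, atoms w_1 > w_2 > ...
  Realised via the standard representation w_i = 1/Gamma_i, Gamma_i = E_1+...+E_i,
  with E_j i.i.d. Exp(1) (the image of the process under x -> 1/x is a unit-rate
  Poisson process on (0,inf), whose ordered points are Gamma_1 < Gamma_2 < ...).\<close>

definition Xi_space :: "(nat \<Rightarrow> real) measure" where
  "Xi_space = PiM UNIV (\<lambda>_. density lborel (\<lambda>x. ennreal (exponential_density 1 x)))"

text \<open>The i-th largest atom (i >= 1): w_i = 1 / (e 0 + ... + e (i-1)).\<close>
definition pp_atom :: "(nat \<Rightarrow> real) \<Rightarrow> nat \<Rightarrow> real" where
  "pp_atom e i = 1 / (\<Sum>j<i. e j)"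

definition weighted_draw :: "(nat \<Rightarrow> real) \<Rightarrow> nat list \<Rightarrow> nat pmf" where
  "weighted_draw v R = pmf_of_list (map (\<lambda>i. (i, v i / (\<Sum>j\<leftarrow>R. v j))) R)"

primrec succ_sample :: "(nat \<Rightarrow> real) \<Rightarrow> nat \<Rightarrow> nat list \<Rightarrow> nat list pmf" where
  "succ_sample v 0 R = return_pmf []"
| "succ_sample v (Suc n) R =
     bind_pmf (weighted_draw v R) (\<lambda>i. map_pmf (Cons i) (succ_sample v n (removeAll i R)))"

primrec iid_sample :: "(nat \<Rightarrow> real) \<Rightarrow> nat \<Rightarrow> nat list \<Rightarrow> nat list pmf" where
  "iid_sample v 0 R = return_pmf []"
| "iid_sample v (Suc n) R =
     bind_pmf (weighted_draw v R) (\<lambda>i. map_pmf (Cons i) (iid_sample v n R))"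

definition index_range :: "real \<Rightarrow> nat \<Rightarrow> nat list" where
  "index_range \<gamma> N = [1..<nat \<lceil>real N powr \<gamma>\<rceil> + 1]"

definition I_sample :: "real \<Rightarrow> real \<Rightarrow> nat \<Rightarrow> (nat \<Rightarrow> real) \<Rightarrow> nat list pmf" where
  "I_sample \<gamma> \<beta> N e = succ_sample (\<lambda>i. pp_atom e i powr \<beta>) N (index_range \<gamma> N)"

definition J_sample :: "real \<Rightarrow> real \<Rightarrow> nat \<Rightarrow> (nat \<Rightarrow> real) \<Rightarrow> nat list pmf" where
  "J_sample \<gamma> \<beta> N e = iid_sample (\<lambda>i. pp_atom e i powr \<beta>) N (index_range \<gamma> N)"

text \<open>E[ sum_k f(w_{K_k}) ] for a sample K with conditional law samp e given Xi
  (total expectation = integral over Xi of the conditional expectation).\<close>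
definition total_expect ::
  "((nat \<Rightarrow> real) \<Rightarrow> nat list pmf) \<Rightarrow> (real \<Rightarrow> real) \<Rightarrow> ennreal" where
  "total_expect samp f =
     (\<integral>\<^sup>+ e. (\<integral>\<^sup>+ ks. ennreal (\<Sum>k\<leftarrow>ks. f (pp_atom e k)) \<partial>measure_pmf (samp e)) \<partial>Xi_space)"

end

theory Submission
  imports Defs "HOL-Real_Asymp.Real_Asymp"
begin

(* Conditionally on the atoms, every draw of either scheme picks index i with probability at
   most w_i^beta / D, where D is the weight of the ceil(N^gamma) - N + 1 smallest atoms: fewer
   than N indices are ever removed. So the conditional expectation is at most N U / D with
   U = sum_i w_i^a 1{w_i >= N^-b} w_i^beta. With w_i = 1 / Gamma_i, Gamma_i the arrival times
   of a unit-rate Poisson process, Campbell's formula gives E U <= N^(b |A|) / |A|. On the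
   event Gamma_j <= (1 + delta) j for N <= j <= ceil(N^gamma) the weight D is at least
   (1 + delta)^-beta sum_j j^-beta, which is about (1 + delta)^-beta N^(gamma (1 - beta)) / (1 - beta);
   the complementary event is exponentially unlikely in N by a Chernoff bound on Gamma_j.
   Letting delta tend to 0 yields the constant (1 - beta) / |A|. *)

section \<open>Weighted sampling\<close>

lemma nn_integral_weighted_draw:
  fixes v :: "nat \<Rightarrow> real" and g :: "nat \<Rightarrow> ennreal"
  assumes "distinct R" and pos: "\<And>i. i \<in> set R \<Longrightarrow> v i > 0" and "R \<noteq> []"
  shows "(\<integral>\<^sup>+i. g i \<partial>measure_pmf (weighted_draw v R)) =
         (\<Sum>i\<in>set R. g i * ennreal (v i / (\<Sum>j\<in>set R. v j)))"
proof -
  define S where "S = (\<Sum>j\<in>set R. v j)"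
  have "S > 0" unfolding S_def using pos \<open>R \<noteq> []\<close> by (intro sum_pos) auto
  have draw_eq: "weighted_draw v R = pmf_of_list (map (\<lambda>i. (i, v i / S)) R)"
    unfolding weighted_draw_def S_def using \<open>distinct R\<close> by (simp add: sum_list_distinct_conv_sum_set)
  have wf: "pmf_of_list_wf (map (\<lambda>i. (i, v i / S)) R)"
  proof (rule pmf_of_list_wfI)
    show "x \<in> set (map snd (map (\<lambda>i. (i, v i / S)) R)) \<Longrightarrow> 0 \<le> x" for x
      using pos \<open>S > 0\<close> by (auto intro!: divide_nonneg_pos less_imp_le)
    show "sum_list (map snd (map (\<lambda>i. (i, v i / S)) R)) = 1"
      using \<open>distinct R\<close> \<open>S > 0\<close>
      by (simp add: o_def sum_list_distinct_conv_sum_set sum_divide_distrib[symmetric] S_def)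
  qed
  have "filter (\<lambda>i. i = x) R = [x]" if "x \<in> set R" for x
    using \<open>distinct R\<close> that by (induction R) (auto simp: filter_empty_conv)
  then have pmf_draw: "pmf (weighted_draw v R) x = v x / S" if "x \<in> set R" for x
    unfolding draw_eq using that by (simp add: pmf_pmf_of_list[OF wf] filter_map o_def)
  have "(\<integral>\<^sup>+i. g i \<partial>measure_pmf (weighted_draw v R)) = (\<Sum>i\<in>set R. g i * pmf (weighted_draw v R) i)"
    using set_pmf_of_list[OF wf] unfolding draw_eq by (intro nn_integral_measure_pmf_support) auto
  also have "\<dots> = (\<Sum>i\<in>set R. g i * ennreal (v i / S))"
    by (intro sum.cong) (auto simp: pmf_draw)
  finally show ?thesis unfolding S_def .
qed

lemma nn_integral_draw_Cons_le:
  fixes v f :: "nat \<Rightarrow> real" and Q :: "nat \<Rightarrow> nat list pmf"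
  assumes "distinct R" and pos: "\<And>i. i \<in> set R \<Longrightarrow> v i > 0"
    and "0 < D" and D_le: "D \<le> (\<Sum>j\<in>set R. v j)"
    and f_nonneg: "\<And>i. f i \<ge> 0" and "C \<ge> 0"
    and Q_le: "\<And>i. i \<in> set R \<Longrightarrow> (\<integral>\<^sup>+ks. ennreal (\<Sum>k\<leftarrow>ks. f k) \<partial>measure_pmf (Q i)) \<le> ennreal C"
  shows "(\<integral>\<^sup>+ks. ennreal (\<Sum>k\<leftarrow>ks. f k)
            \<partial>measure_pmf (bind_pmf (weighted_draw v R) (\<lambda>i. map_pmf (Cons i) (Q i))))
         \<le> ennreal ((\<Sum>i\<in>set R. f i * v i) / D + C)"
proof -
  define S where "S = (\<Sum>j\<in>set R. v j)"
  have "S > 0" using \<open>0 < D\<close> D_le by (simp add: S_def)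
  then have "R \<noteq> []" by (auto simp: S_def)
  have "(\<integral>\<^sup>+ks. ennreal (\<Sum>k\<leftarrow>ks. f k)
            \<partial>measure_pmf (bind_pmf (weighted_draw v R) (\<lambda>i. map_pmf (Cons i) (Q i))))
      = (\<integral>\<^sup>+i. (\<integral>\<^sup>+ks. ennreal (f i) + ennreal (\<Sum>k\<leftarrow>ks. f k) \<partial>measure_pmf (Q i))
           \<partial>measure_pmf (weighted_draw v R))"
    using f_nonneg by (simp, intro nn_integral_cong ennreal_plus) (auto intro!: sum_list_nonneg)
  also have "\<dots> = (\<integral>\<^sup>+i. ennreal (f i) + (\<integral>\<^sup>+ks. ennreal (\<Sum>k\<leftarrow>ks. f k) \<partial>measure_pmf (Q i))
           \<partial>measure_pmf (weighted_draw v R))"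
    by (intro nn_integral_cong) (simp add: nn_integral_add measure_pmf.emeasure_space_1)
  also have "\<dots> = (\<Sum>i\<in>set R. (ennreal (f i) + (\<integral>\<^sup>+ks. ennreal (\<Sum>k\<leftarrow>ks. f k) \<partial>measure_pmf (Q i)))
                      * ennreal (v i / S))"
    unfolding S_def using \<open>distinct R\<close> pos \<open>R \<noteq> []\<close> by (rule nn_integral_weighted_draw)
  also have "\<dots> \<le> (\<Sum>i\<in>set R. ennreal ((f i + C) * (v i / S)))"
  proof (intro sum_mono)
    fix i assume "i \<in> set R"
    then have "(ennreal (f i) + (\<integral>\<^sup>+ks. ennreal (\<Sum>k\<leftarrow>ks. f k) \<partial>measure_pmf (Q i))) * ennreal (v i / S)
        \<le> (ennreal (f i) + ennreal C) * ennreal (v i / S)"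
      by (intro mult_right_mono add_left_mono Q_le) auto
    also have "\<dots> = ennreal ((f i + C) * (v i / S))"
      using f_nonneg \<open>C \<ge> 0\<close> pos[OF \<open>i \<in> set R\<close>] \<open>S > 0\<close>
      by (simp add: ennreal_mult'[symmetric] ennreal_plus[symmetric] del: ennreal_plus)
    finally show "(ennreal (f i) + (\<integral>\<^sup>+ks. ennreal (\<Sum>k\<leftarrow>ks. f k) \<partial>measure_pmf (Q i))) * ennreal (v i / S)
        \<le> ennreal ((f i + C) * (v i / S))" .
  qed
  also have "\<dots> = ennreal ((\<Sum>i\<in>set R. f i * v i) / S + C)"
  proof -
    have "(\<Sum>i\<in>set R. (f i + C) * (v i / S)) = (\<Sum>i\<in>set R. f i * v i) / S + C"
      using \<open>S > 0\<close> unfolding S_def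
      by (simp add: distrib_right sum.distrib sum_divide_distrib[symmetric]
          sum_distrib_left[symmetric] field_simps)
    then show ?thesis
      using pos f_nonneg \<open>C \<ge> 0\<close> \<open>S > 0\<close>
      by (subst sum_ennreal) (auto intro!: divide_nonneg_pos mult_nonneg_nonneg simp: less_imp_le)
  qed
  also have "\<dots> \<le> ennreal ((\<Sum>i\<in>set R. f i * v i) / D + C)"
    using \<open>0 < D\<close> D_le pos f_nonneg
    by (intro ennreal_leI add_right_mono divide_left_mono sum_nonneg)
       (auto simp: S_def less_imp_le)
  finally show ?thesis .
qed

text \<open>\<open>D\<close> bounds the weight of every set of indices that can still be left over while
  draws remain.\<close>

lemma nn_integral_succ_sample_le:
  fixes v f :: "nat \<Rightarrow> real"
  assumes "0 < D" and f_nonneg: "\<And>i. f i \<ge> 0"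
    and "distinct R" and pos: "\<And>i. i \<in> set R \<Longrightarrow> v i > 0"
    and D_le: "\<And>S. S \<subseteq> set R \<Longrightarrow> length R < card S + n \<Longrightarrow> D \<le> (\<Sum>j\<in>S. v j)"
  shows "(\<integral>\<^sup>+ks. ennreal (\<Sum>k\<leftarrow>ks. f k) \<partial>measure_pmf (succ_sample v n R))
      \<le> ennreal (real n * (\<Sum>i\<in>set R. f i * v i) / D)"
  using assms(3-)
proof (induction n arbitrary: R)
  case 0
  then show ?case by simp
next
  case (Suc n)
  define T where "T = (\<Sum>i\<in>set R. f i * v i)"
  have fv_nonneg: "0 \<le> f i * v i" if "i \<in> set R" for i
    using f_nonneg Suc.prems(2)[OF that] by simp
  then have "0 \<le> T" unfolding T_def by (intro sum_nonneg)
  have "D \<le> (\<Sum>j\<in>set R. v j)"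
    using Suc.prems(1,3) by (simp add: distinct_card)
  moreover have "(\<integral>\<^sup>+ks. ennreal (\<Sum>k\<leftarrow>ks. f k) \<partial>measure_pmf (succ_sample v n (removeAll i R)))
      \<le> ennreal (real n * T / D)" if "i \<in> set R" for i
  proof -
    have "length R = Suc (length (removeAll i R))"
      using Suc.prems(1) that by (simp add: distinct_remove1_removeAll[symmetric] length_remove1)
        (metis Suc_pred length_pos_if_in_set)
    then have "(\<integral>\<^sup>+ks. ennreal (\<Sum>k\<leftarrow>ks. f k) \<partial>measure_pmf (succ_sample v n (removeAll i R)))
        \<le> ennreal (real n * (\<Sum>j\<in>set (removeAll i R). f j * v j) / D)"
      using Suc.prems by (intro Suc.IH) (auto simp: distinct_removeAll)
    also have "\<dots> \<le> ennreal (real n * T / D)"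
      unfolding T_def using \<open>0 < D\<close> fv_nonneg
      by (intro ennreal_leI divide_right_mono mult_left_mono sum_mono2) auto
    finally show ?thesis .
  qed
  ultimately have "(\<integral>\<^sup>+ks. ennreal (\<Sum>k\<leftarrow>ks. f k) \<partial>measure_pmf (succ_sample v (Suc n) R))
      \<le> ennreal (T / D + real n * T / D)"
    unfolding T_def succ_sample.simps using \<open>0 < D\<close> f_nonneg \<open>0 \<le> T\<close>[unfolded T_def] Suc.prems(1,2)
    by (intro nn_integral_draw_Cons_le) auto
  then show ?case
    by (simp add: T_def add_divide_distrib[symmetric] algebra_simps)
qed

lemma nn_integral_iid_sample_le:
  fixes v f :: "nat \<Rightarrow> real"
  assumes "0 < D" and f_nonneg: "\<And>i. f i \<ge> 0"
    and "distinct R" and pos: "\<And>i. i \<in> set R \<Longrightarrow> v i > 0" and "D \<le> (\<Sum>j\<in>set R. v j)"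
  shows "(\<integral>\<^sup>+ks. ennreal (\<Sum>k\<leftarrow>ks. f k) \<partial>measure_pmf (iid_sample v n R))
      \<le> ennreal (real n * (\<Sum>i\<in>set R. f i * v i) / D)"
proof (induction n)
  case 0
  then show ?case by simp
next
  case (Suc n)
  define T where "T = (\<Sum>i\<in>set R. f i * v i)"
  have "0 \<le> T"
    unfolding T_def using f_nonneg pos by (intro sum_nonneg) (simp add: less_imp_le)
  have "(\<integral>\<^sup>+ks. ennreal (\<Sum>k\<leftarrow>ks. f k) \<partial>measure_pmf (iid_sample v (Suc n) R))
      \<le> ennreal (T / D + real n * T / D)"
    unfolding T_def iid_sample.simps using assms Suc.IH \<open>0 \<le> T\<close>[unfolded T_def]
    by (intro nn_integral_draw_Cons_le) auto
  then show ?case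
    by (simp add: T_def add_divide_distrib[symmetric] algebra_simps)
qed

lemma sum_tail_le_sum_antimono:
  fixes v :: "nat \<Rightarrow> real"
  assumes anti: "\<And>i j. 1 \<le> i \<Longrightarrow> i \<le> j \<Longrightarrow> v j \<le> v i" and nonneg: "\<And>i. 0 \<le> v i"
    and "1 \<le> N" and S: "S \<subseteq> {1..M}" and card_le: "card {N..M} \<le> card S"
  shows "(\<Sum>j\<in>{N..M}. v j) \<le> (\<Sum>j\<in>S. v j)"
proof -
  define A where "A = {N..M}"
  have "finite S" using S finite_subset by blast
  have "finite A" by (simp add: A_def)
  have "card (A - S) \<le> card (S - A)"
    using card_le \<open>finite A\<close> \<open>finite S\<close> card_Int_Diff[of A S] card_Int_Diff[of S A]
    by (simp add: A_def Int_commute)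
  have "(\<Sum>j\<in>A - S. v j) \<le> (\<Sum>j\<in>A - S. v N)"
    using \<open>1 \<le> N\<close> by (intro sum_mono anti) (auto simp: A_def)
  also have "\<dots> \<le> (\<Sum>j\<in>S - A. v N)"
    using \<open>card (A - S) \<le> card (S - A)\<close> nonneg by (simp add: mult_right_mono)
  also have "\<dots> \<le> (\<Sum>j\<in>S - A. v j)"
    using S by (intro sum_mono anti) (auto simp: A_def)
  finally show ?thesis
    unfolding A_def[symmetric]
    using sum.Int_Diff[OF \<open>finite A\<close>, of v S] sum.Int_Diff[OF \<open>finite S\<close>, of v A]
    by (simp add: Int_commute)
qed

section \<open>Conditioning on the atoms\<close>

definition arrival :: "(nat \<Rightarrow> real) \<Rightarrow> nat \<Rightarrow> real" where
  "arrival e i = (\<Sum>j<i. e j)"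

lemma pp_atom_eq_arrival: "pp_atom e i = 1 / arrival e i"
  by (simp add: pp_atom_def arrival_def)

lemma one_div_powr: "0 < x \<Longrightarrow> (1 / x) powr c = x powr (- c)" for x :: real
  by (simp add: powr_minus_divide powr_divide)

lemma arrival_mono: "(\<And>k. e k > 0) \<Longrightarrow> i \<le> j \<Longrightarrow> arrival e i \<le> arrival e j"
  unfolding arrival_def by (intro sum_mono2) (auto intro: less_imp_le)

lemma arrival_pos: "(\<And>k. e k > 0) \<Longrightarrow> 1 \<le> i \<Longrightarrow> arrival e i > 0"
  unfolding arrival_def by (intro sum_pos) (auto simp: lessThan_empty_iff)

lemma pp_atom_powr_antimono:
  assumes "\<And>k. e k > 0" "0 \<le> \<beta>" "1 \<le> i" "i \<le> j"
  shows "pp_atom e j powr \<beta> \<le> pp_atom e i powr \<beta>"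
  using arrival_mono[of e i j] arrival_pos[of e i] assms
  by (auto simp: pp_atom_eq_arrival intro!: powr_mono2 divide_left_mono)

lemma set_index_range: "set (index_range \<gamma> N) = {1..nat \<lceil>real N powr \<gamma>\<rceil>}"
  by (auto simp: index_range_def)

text \<open>\<open>D\<close> is the weight of the \<open>M - N + 1\<close> smallest atoms, which bounds whatever weight
  is left after fewer than \<open>N\<close> draws.\<close>

lemma nn_integral_sample_le:
  fixes F :: "real \<Rightarrow> real"
  assumes pos: "\<And>k. e k > 0" and "0 < \<beta>" and F_nonneg: "\<And>x. F x \<ge> 0"
    and "1 \<le> N" and "N \<le> nat \<lceil>real N powr \<gamma>\<rceil>"
  defines "M \<equiv> nat \<lceil>real N powr \<gamma>\<rceil>"
  defines "D \<equiv> (\<Sum>j\<in>{N..M}. pp_atom e j powr \<beta>)"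
  defines "U \<equiv> (\<Sum>i\<in>{1..M}. F (pp_atom e i) * pp_atom e i powr \<beta>)"
  shows "(\<integral>\<^sup>+ks. ennreal (\<Sum>k\<leftarrow>ks. F (pp_atom e k)) \<partial>measure_pmf (I_sample \<gamma> \<beta> N e))
           \<le> ennreal (real N * U / D)"
    and "(\<integral>\<^sup>+ks. ennreal (\<Sum>k\<leftarrow>ks. F (pp_atom e k)) \<partial>measure_pmf (J_sample \<gamma> \<beta> N e))
           \<le> ennreal (real N * U / D)"
proof -
  define v where "v i = pp_atom e i powr \<beta>" for i
  define R where "R = index_range \<gamma> N"
  have R: "set R = {1..M}" "distinct R" "length R = M"
    unfolding R_def M_def set_index_range by (simp_all only: index_range_def length_upt) simp_all
  have v_pos: "v i > 0" if "1 \<le> i" for i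
    using arrival_pos[of e i] pos that by (simp add: v_def pp_atom_eq_arrival)
  have "0 < D"
    unfolding D_def v_def[symmetric] using v_pos assms(4,5) by (intro sum_pos) (auto simp: M_def)
  have D_le: "D \<le> (\<Sum>j\<in>S. v j)" if "S \<subseteq> set R" "length R < card S + N" for S
    unfolding D_def v_def[symmetric] using \<open>1 \<le> N\<close> that R
    by (intro sum_tail_le_sum_antimono) (auto simp: v_def pp_atom_powr_antimono pos less_imp_le[OF \<open>0 < \<beta>\<close>])
  have U_eq: "U = (\<Sum>i\<in>set R. F (pp_atom e i) * v i)"
    by (simp add: U_def R v_def)
  show "(\<integral>\<^sup>+ks. ennreal (\<Sum>k\<leftarrow>ks. F (pp_atom e k)) \<partial>measure_pmf (I_sample \<gamma> \<beta> N e))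
           \<le> ennreal (real N * U / D)"
    unfolding I_sample_def v_def[symmetric, abs_def] R_def[symmetric] U_eq
    using \<open>0 < D\<close> F_nonneg R v_pos D_le by (intro nn_integral_succ_sample_le) auto
  have "D \<le> (\<Sum>j\<in>set R. v j)"
    using D_le[of "set R"] \<open>1 \<le> N\<close> R by (simp add: distinct_card)
  then show "(\<integral>\<^sup>+ks. ennreal (\<Sum>k\<leftarrow>ks. F (pp_atom e k)) \<partial>measure_pmf (J_sample \<gamma> \<beta> N e))
           \<le> ennreal (real N * U / D)"
    unfolding J_sample_def v_def[symmetric, abs_def] R_def[symmetric] U_eq
    using \<open>0 < D\<close> F_nonneg R v_pos by (intro nn_integral_iid_sample_le) auto
qed

section \<open>Arrival times of the unit Poisson process\<close>

abbreviation Exp1 :: "real measure" where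
  "Exp1 \<equiv> density lborel (\<lambda>x. ennreal (exponential_density 1 x))"

lemma prob_space_Exp1: "prob_space Exp1"
  using prob_space_exponential_density[of 1] by simp

interpretation Xi: prob_space Xi_space
  unfolding Xi_space_def by (intro prob_space_PiM prob_space_Exp1)

interpretation Exp1_seq: product_prob_space "\<lambda>_. Exp1" UNIV
  by (simp add: product_prob_space_def product_prob_space_axioms_def prob_space_Exp1
      product_sigma_finite_def prob_space_imp_sigma_finite)

lemma measurable_coordinate_Xi [measurable]: "(\<lambda>e. e k) \<in> borel_measurable Xi_space"
  unfolding Xi_space_def by measurable

lemma distr_coordinate_Xi: "distr Xi_space borel (\<lambda>e. e k) = Exp1"
proof -
  have "distr Xi_space borel (\<lambda>e. e k) = distr Xi_space Exp1 (\<lambda>e. e k)"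
    by (intro distr_cong) auto
  also have "\<dots> = Exp1"
    unfolding Xi_space_def by (rule Exp1_seq.PiM_component) simp
  finally show ?thesis .
qed

lemma indep_vars_coordinates_Xi: "Xi.indep_vars (\<lambda>_. borel) (\<lambda>k e. e k) UNIV"
proof (subst Xi.indep_vars_iff_distr_eq_PiM)
  have "sets (Pi\<^sub>M UNIV (\<lambda>_. borel)) = sets Xi_space"
    unfolding Xi_space_def by (intro sets_PiM_cong) auto
  then have "distr Xi_space (Pi\<^sub>M UNIV (\<lambda>_. borel)) (\<lambda>e. \<lambda>k\<in>UNIV. e k) = distr Xi_space Xi_space (\<lambda>e. e)"
    by (intro distr_cong) auto
  also have "\<dots> = Pi\<^sub>M UNIV (\<lambda>k. distr Xi_space borel (\<lambda>e. e k))"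
    by (simp add: distr_coordinate_Xi) (simp add: Xi_space_def)
  finally show "distr Xi_space (Pi\<^sub>M UNIV (\<lambda>_. borel)) (\<lambda>e. \<lambda>k\<in>UNIV. e k)
      = Pi\<^sub>M UNIV (\<lambda>k. distr Xi_space borel (\<lambda>e. e k))" .
qed auto

lemma AE_Xi_pos: "AE e in Xi_space. \<forall>k. e k > 0"
proof (subst AE_all_countable, intro allI)
  fix k
  have "AE x in Exp1. x > 0"
    using AE_lborel_singleton[of 0]
    by (subst AE_density) (auto elim!: eventually_mono simp: exponential_density_def)
  then show "AE e in Xi_space. e k > 0"
    unfolding Xi_space_def by (intro Exp1_seq.AE_component) auto
qed

lemma measurable_arrival [measurable]: "(\<lambda>e. arrival e i) \<in> borel_measurable Xi_space"
  unfolding arrival_def by measurable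

lemma distributed_arrival:
  assumes "1 \<le> i"
  shows "distributed Xi_space lborel (\<lambda>e. arrival e i) (\<lambda>x. ennreal (erlang_density (i - 1) 1 x))"
proof -
  have "distributed Xi_space lborel (\<lambda>e. \<Sum>j\<in>{..<i}. e j) (erlang_density (card {..<i} - 1) 1)"
  proof (rule Xi.exponential_distributed_sum)
    show "Xi.indep_vars (\<lambda>_. borel) (\<lambda>k e. e k) {..<i}"
      using indep_vars_coordinates_Xi by (rule Xi.indep_vars_subset) simp
    show "distributed Xi_space lborel (\<lambda>e. e k) (exponential_density 1)" for k
      using distr_coordinate_Xi[of k] by (auto simp: distributed_def cong: distr_cong)
  qed (use assms in \<open>auto simp: lessThan_empty_iff\<close>)
  then show ?thesis unfolding arrival_def by simp
qed

lemma nn_integral_Xi_prod: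
  fixes g :: "nat \<Rightarrow> real \<Rightarrow> ennreal"
  assumes [measurable]: "\<And>k. g k \<in> borel_measurable borel"
  shows "(\<integral>\<^sup>+e. (\<Prod>k<n. g k (e k)) \<partial>Xi_space) = (\<Prod>k<n. \<integral>\<^sup>+x. g k x \<partial>Exp1)"
proof -
  have "(\<integral>\<^sup>+e. (\<Prod>k<n. g k (e k)) \<partial>Xi_space) = (\<Prod>k<n. \<integral>\<^sup>+e. g k (e k) \<partial>Xi_space)"
    by (rule Xi.indep_vars_nn_integral)
       (auto intro!: Xi.indep_vars_compose2[OF Xi.indep_vars_subset[OF indep_vars_coordinates_Xi]])
  also have "\<dots> = (\<Prod>k<n. \<integral>\<^sup>+x. g k x \<partial>Exp1)"
  proof (intro prod.cong refl)
    fix k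
    have "(\<integral>\<^sup>+e. g k (e k) \<partial>Xi_space) = (\<integral>\<^sup>+x. g k x \<partial>distr Xi_space borel (\<lambda>e. e k))"
      by (simp add: nn_integral_distr)
    then show "(\<integral>\<^sup>+e. g k (e k) \<partial>Xi_space) = (\<integral>\<^sup>+x. g k x \<partial>Exp1)"
      by (simp add: distr_coordinate_Xi)
  qed
  finally show ?thesis .
qed

lemma nn_integral_powr_Icc_0:
  assumes "0 < p" "p < 1" "0 \<le> c"
  shows "(\<integral>\<^sup>+x. ennreal (indicator {0..c} x * x powr (-p)) \<partial>lborel) = ennreal (c powr (1-p) / (1-p))"
proof -
  have "((\<lambda>x. x powr (-p)) has_integral (c powr (-p+1) / (-p+1))) {0..c}"
    by (rule has_integral_powr_from_0) (use assms in auto)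
  then have "integral\<^sup>N lborel (\<lambda>x. indicator {0..c} x * x powr (-p)) = c powr (-p+1) / (-p+1)"
    by (intro nn_integral_has_integral_lebesgue) auto
  then show ?thesis by simp
qed

lemma exponential_density_1_mult_exp:
  "u < 1 \<Longrightarrow> exponential_density 1 x * exp (u * x) = exponential_density (1 - u) x / (1 - u)"
  by (auto simp: exponential_density_def field_simps simp flip: exp_add)

lemma nn_integral_exponential_density:
  assumes "0 < l"
  shows "(\<integral>\<^sup>+x. ennreal (exponential_density l x) \<partial>lborel) = 1"
proof -
  interpret prob_space "density lborel (exponential_density l)"
    using assms by (rule prob_space_exponential_density)
  show ?thesis
    using emeasure_space_1 by (simp add: emeasure_density)
qed

lemma nn_integral_exp_Exp1:
  assumes "u < 1"
  shows "(\<integral>\<^sup>+x. ennreal (exp (u * x)) \<partial>Exp1) = ennreal (1 / (1 - u))"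
proof -
  have "(\<integral>\<^sup>+x. ennreal (exp (u * x)) \<partial>Exp1)
      = (\<integral>\<^sup>+x. ennreal (1 / (1 - u)) * ennreal (exponential_density (1 - u) x) \<partial>lborel)"
    using assms by (auto simp: nn_integral_density exponential_density_1_mult_exp
        ennreal_mult[symmetric] intro!: nn_integral_cong)
  also have "\<dots> = ennreal (1 / (1 - u))"
    using assms by (simp add: nn_integral_cmult nn_integral_exponential_density)
  finally show ?thesis .
qed

lemma nn_integral_powr_exp_Exp1_le:
  assumes "0 < p" "p < 1" "u < 1"
  shows "(\<integral>\<^sup>+x. ennreal (x powr (-p) * exp (u * x)) \<partial>Exp1) \<le> ennreal (1 / (1 - p) + 1 / (1 - u))"
proof -
  define g where "g x = exponential_density (1 - u) x / (1 - u)" for x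
  have g_nonneg: "0 \<le> g x" for x
    using assms by (simp add: g_def exponential_density_def)
  have pointwise: "exponential_density 1 x * (x powr (-p) * exp (u * x))
      \<le> indicator {0..1} x * x powr (-p) + g x" for x
  proof (cases "x < 0")
    case True
    then show ?thesis by (simp add: exponential_density_def g_def)
  next
    case False
    have "g x \<le> 1"
      using False assms by (simp add: g_def exponential_density_def)
    have "exponential_density 1 x * (x powr (-p) * exp (u * x)) = x powr (-p) * g x"
      using exponential_density_1_mult_exp[OF \<open>u < 1\<close>, of x]
      by (simp add: g_def mult.left_commute[of "exponential_density 1 x"])
    also have "\<dots> \<le> indicator {0..1} x * x powr (-p) + g x"
    proof (cases "x \<le> 1")
      case True
      then show ?thesis
        using False \<open>g x \<le> 1\<close> g_nonneg[of x] mult_left_mono[of "g x" 1 "x powr (-p)"] by simp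
    next
      case False
      then have "x powr (-p) \<le> 1"
        using assms by (simp add: powr_minus inverse_le_1_iff ge_one_powr_ge_zero)
      then show ?thesis
        using False g_nonneg mult_right_mono[of "x powr (-p)" 1 "g x"] by simp
    qed
    finally show ?thesis .
  qed
  have "(\<integral>\<^sup>+x. ennreal (x powr (-p) * exp (u * x)) \<partial>Exp1)
      \<le> (\<integral>\<^sup>+x. ennreal (indicator {0..1} x * x powr (-p))
              + ennreal (1 / (1 - u)) * ennreal (exponential_density (1 - u) x) \<partial>lborel)"
    using pointwise assms
    by (auto simp: nn_integral_density g_def ennreal_mult[symmetric] ennreal_plus[symmetric]
        simp del: ennreal_plus intro!: nn_integral_mono ennreal_leI)
  also have "\<dots> = ennreal (1 / (1 - p)) + ennreal (1 / (1 - u))"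
    using assms
    by (simp add: nn_integral_add nn_integral_cmult nn_integral_powr_Icc_0
        nn_integral_exponential_density)
  finally show ?thesis
    using assms by simp
qed

lemma sum_erlang_density_le_1: "(\<Sum>k<n. erlang_density k 1 x) \<le> 1"
proof (cases "n = 0 \<or> x < 0")
  case True
  then show ?thesis by (auto simp: erlang_density_def)
next
  case False
  then obtain m where n: "n = Suc m" and "0 \<le> x" by (cases n) auto
  have "(\<Sum>k<n. erlang_density k 1 x) = 1 - erlang_CDF m 1 x"
    unfolding n lessThan_Suc_atMost using \<open>0 \<le> x\<close>
    by (simp add: erlang_density_def erlang_CDF_def)
  then show ?thesis by simp
qed

text \<open>Campbell's formula, as an inequality since only finitely many arrival times are summed:
  the Erlang densities of \<open>\<Gamma>\<^sub>1, \<Gamma>\<^sub>2, \<dots>\<close> add up to the unit intensity.\<close>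

lemma sum_nn_integral_arrival_le:
  fixes \<phi> :: "real \<Rightarrow> ennreal"
  assumes [measurable]: "\<phi> \<in> borel_measurable borel"
  shows "(\<Sum>i\<in>{1..n}. \<integral>\<^sup>+e. \<phi> (arrival e i) \<partial>Xi_space) \<le> (\<integral>\<^sup>+x\<in>{0..}. \<phi> x \<partial>lborel)"
proof -
  have "(\<Sum>i\<in>{1..n}. \<integral>\<^sup>+e. \<phi> (arrival e i) \<partial>Xi_space)
      = (\<Sum>i\<in>{1..n}. \<integral>\<^sup>+x. ennreal (erlang_density (i - 1) 1 x) * \<phi> x \<partial>lborel)"
    by (intro sum.cong refl, subst distributed_nn_integral[OF distributed_arrival]) auto
  also have "\<dots> = (\<integral>\<^sup>+x. ennreal (\<Sum>i\<in>{1..n}. erlang_density (i - 1) 1 x) * \<phi> x \<partial>lborel)"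
    by (simp add: nn_integral_sum[symmetric] sum_distrib_right[symmetric])
  also have "\<dots> \<le> (\<integral>\<^sup>+x\<in>{0..}. \<phi> x \<partial>lborel)"
  proof (intro nn_integral_mono)
    fix x :: real
    have "(\<Sum>i\<in>{1..n}. erlang_density (i - 1) 1 x) = (\<Sum>k<n. erlang_density k 1 x)"
      by (rule sum.reindex_bij_witness[of _ Suc "\<lambda>i. i - 1"]) auto
    then show "ennreal (\<Sum>i\<in>{1..n}. erlang_density (i - 1) 1 x) * \<phi> x \<le> \<phi> x * indicator {0..} x"
      using sum_erlang_density_le_1[of x n]
      by (cases "x < 0") (auto simp: erlang_density_def mult.commute intro!: mult_left_le)
  qed
  finally show ?thesis .
qed

lemma nn_integral_powr_exp_arrival_le:
  assumes "1 \<le> j" "0 < p" "p < 1" "u < 1"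
  shows "(\<integral>\<^sup>+e. ennreal (e 0 powr (-p) * exp (u * arrival e j)) \<partial>Xi_space)
     \<le> ennreal ((1 / (1 - p) + 1 / (1 - u)) * (1 / (1 - u)) ^ (j - 1))"
proof -
  obtain m where j: "j = Suc m" using assms(1) by (cases j) auto
  define g where "g (k::nat) (x::real) = ennreal ((if k = 0 then x powr (-p) else 1) * exp (u * x))" for k x
  have [measurable]: "g k \<in> borel_measurable borel" for k
    unfolding g_def by measurable
  have prod_eq: "ennreal (e 0 powr (-p) * exp (u * arrival e j)) = (\<Prod>k<j. g k (e k))" for e
    unfolding j arrival_def g_def prod.lessThan_Suc_shift sum.lessThan_Suc_shift
    by (simp add: prod_ennreal exp_sum sum_distrib_left distrib_left exp_add ennreal_mult' mult.assoc
        del: sum.lessThan_Suc prod.lessThan_Suc)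
  have "(\<integral>\<^sup>+e. ennreal (e 0 powr (-p) * exp (u * arrival e j)) \<partial>Xi_space)
      = (\<Prod>k<j. \<integral>\<^sup>+x. g k x \<partial>Exp1)"
    unfolding prod_eq by (rule nn_integral_Xi_prod) measurable
  also have "\<dots> = (\<integral>\<^sup>+x. g 0 x \<partial>Exp1) * ennreal (1 / (1 - u)) ^ m"
  proof -
    have "(\<integral>\<^sup>+x. g (Suc k) x \<partial>Exp1) = ennreal (1 / (1 - u))" for k
      using assms by (simp add: g_def nn_integral_exp_Exp1)
    then show ?thesis
      unfolding j prod.lessThan_Suc_shift by simp
  qed
  also have "\<dots> \<le> ennreal (1 / (1 - p) + 1 / (1 - u)) * ennreal (1 / (1 - u)) ^ m"
    using nn_integral_powr_exp_Exp1_le[of p u] assms by (intro mult_right_mono) (auto simp: g_def)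
  finally show ?thesis
    using assms by (simp add: j ennreal_mult ennreal_power)
qed

section \<open>Averaging over the point process\<close>

lemma powr_le_exp_div:
  fixes x \<beta> s :: real
  assumes "0 < x" "0 \<le> \<beta>" "\<beta> \<le> 1" "0 < s" "s \<le> 1"
  shows "x powr \<beta> \<le> exp (s * x) / s"
proof (cases "x \<le> 1")
  case True
  have "x powr \<beta> \<le> 1"
    using True assms by (intro powr_le1) auto
  also have "1 \<le> 1 / s"
    using assms by simp
  also have "\<dots> \<le> exp (s * x) / s"
    using assms by (intro divide_right_mono) auto
  finally show ?thesis .
next
  case False
  have "x powr \<beta> \<le> x powr 1"
    using False assms by (intro powr_mono) auto
  also have "\<dots> = s * x / s"
    using assms by simp
  also have "\<dots> \<le> exp (s * x) / s"
    using exp_ge_add_one_self[of "s * x"] assms by (intro divide_right_mono) linarith+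
  finally show ?thesis .
qed

lemma tail_weight_ge:
  assumes pos: "\<And>k. e k > 0" and "0 \<le> \<beta>" and "0 < \<delta>" and "1 \<le> N"
    and arrival_le: "\<And>j. j \<in> {N..M} \<Longrightarrow> arrival e j \<le> (1 + \<delta>) * real j"
  shows "(1 + \<delta>) powr (-\<beta>) * (\<Sum>j\<in>{N..M}. real j powr (-\<beta>)) \<le> (\<Sum>j\<in>{N..M}. pp_atom e j powr \<beta>)"
  unfolding sum_distrib_left
proof (intro sum_mono)
  fix j assume j: "j \<in> {N..M}"
  then have "arrival e j > 0"
    using arrival_pos[of e j] pos \<open>1 \<le> N\<close> by simp
  have "(1 + \<delta>) powr (-\<beta>) * real j powr (-\<beta>) = ((1 + \<delta>) * real j) powr (-\<beta>)"
    using \<open>0 < \<delta>\<close> by (simp add: powr_mult)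
  also have "\<dots> \<le> arrival e j powr (-\<beta>)"
    using arrival_le[OF j] \<open>arrival e j > 0\<close> \<open>0 \<le> \<beta>\<close> by (intro powr_mono2') auto
  also have "\<dots> = pp_atom e j powr \<beta>"
    using \<open>arrival e j > 0\<close> by (simp add: pp_atom_eq_arrival one_div_powr)
  finally show "(1 + \<delta>) powr (-\<beta>) * real j powr (-\<beta>) \<le> pp_atom e j powr \<beta>" .
qed

lemma weighted_sum_le_first_atom:
  fixes F :: "real \<Rightarrow> real"
  assumes pos: "\<And>k. e k > 0" and "0 \<le> a + \<beta>" and F_le: "\<And>x. x \<ge> 0 \<Longrightarrow> F x \<le> x powr a"
  shows "(\<Sum>i\<in>{1..M}. F (pp_atom e i) * pp_atom e i powr \<beta>) \<le> real M * e 0 powr (- (a + \<beta>))"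
proof -
  have "F (pp_atom e i) * pp_atom e i powr \<beta> \<le> e 0 powr (- (a + \<beta>))" if "i \<in> {1..M}" for i
  proof -
    have "arrival e i > 0"
      using that arrival_pos[of e i] pos by simp
    have "F (pp_atom e i) * pp_atom e i powr \<beta> \<le> pp_atom e i powr a * pp_atom e i powr \<beta>"
      using \<open>arrival e i > 0\<close> F_le[of "pp_atom e i"] by (intro mult_right_mono) (auto simp: pp_atom_eq_arrival)
    also have "\<dots> = arrival e i powr (- (a + \<beta>))"
      using \<open>arrival e i > 0\<close> by (simp add: pp_atom_eq_arrival one_div_powr powr_add[symmetric])
    also have "\<dots> \<le> arrival e 1 powr (- (a + \<beta>))"
      using that arrival_mono[of e 1 i] arrival_pos[of e 1] pos \<open>0 \<le> a + \<beta>\<close>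
      by (intro powr_mono2') auto
    finally show ?thesis by (simp add: arrival_def)
  qed
  then have "(\<Sum>i\<in>{1..M}. F (pp_atom e i) * pp_atom e i powr \<beta>) \<le> (\<Sum>i\<in>{1..M}. e 0 powr (- (a + \<beta>)))"
    by (rule sum_mono)
  then show ?thesis
    by simp
qed

text \<open>If some \<open>\<Gamma>\<^sub>j\<close> is atypically large, an exponential moment of \<open>\<Gamma>\<^sub>j\<close> pays for it:
  \<open>s\<close> is spent on the crude bound \<open>\<Gamma>\<^sub>N\<^sup>\<beta> \<le> exp (s \<Gamma>\<^sub>j) / s\<close>, \<open>t\<close> on the Chernoff factor.\<close>

lemma weighted_sum_div_tail_weight_le_large_arrival:
  fixes F :: "real \<Rightarrow> real"
  assumes pos: "\<And>k. e k > 0" and "0 < \<beta>" "\<beta> \<le> 1" "0 < a"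
    and F_nonneg: "\<And>x. F x \<ge> 0" and F_le: "\<And>x. x \<ge> 0 \<Longrightarrow> F x \<le> x powr a"
    and "0 < t" "0 < s" "s \<le> 1" and "1 \<le> N"
    and j: "j \<in> {N..M}" and arrival_gt: "arrival e j > (1 + \<delta>) * real j"
  defines "U \<equiv> (\<Sum>i\<in>{1..M}. F (pp_atom e i) * pp_atom e i powr \<beta>)"
  defines "D \<equiv> (\<Sum>i\<in>{N..M}. pp_atom e i powr \<beta>)"
  shows "U / D \<le> real M / s * (exp (- t * (1 + \<delta>) * real j)
                   * (e 0 powr (- (a + \<beta>)) * exp ((s + t) * arrival e j)))"
proof -
  have arrival_pos': "arrival e i > 0" if "1 \<le> i" for i
    using arrival_pos[of e i] pos that by simp
  have "1 \<le> j" using j \<open>1 \<le> N\<close> by simp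
  have "0 \<le> U"
    unfolding U_def using F_nonneg by (intro sum_nonneg) simp
  have D_ge: "arrival e N powr (-\<beta>) \<le> D"
    unfolding D_def using member_le_sum[of N "{N..M}" "\<lambda>i. pp_atom e i powr \<beta>"] j arrival_pos'[OF \<open>1 \<le> N\<close>]
    by (simp add: pp_atom_eq_arrival one_div_powr)
  have powr_pos: "0 < arrival e N powr (-\<beta>)"
    using arrival_pos'[OF \<open>1 \<le> N\<close>] by simp
  then have "0 < D" using D_ge by linarith
  have "U / D \<le> U / arrival e N powr (-\<beta>)"
    by (rule divide_left_mono[OF D_ge \<open>0 \<le> U\<close> mult_pos_pos[OF \<open>0 < D\<close> powr_pos]])
  also have "\<dots> = U * arrival e N powr \<beta>"
    by (simp add: powr_minus divide_inverse)
  also have "\<dots> \<le> (real M * e 0 powr (- (a + \<beta>))) * arrival e N powr \<beta>"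
    unfolding U_def using pos F_le \<open>0 < a\<close> \<open>0 < \<beta>\<close>
    by (intro mult_right_mono weighted_sum_le_first_atom) auto
  also have "\<dots> \<le> (real M * e 0 powr (- (a + \<beta>))) * (exp (s * arrival e j) / s * exp (t * (arrival e j - (1 + \<delta>) * real j)))"
  proof (intro mult_left_mono)
    have "arrival e N powr \<beta> \<le> arrival e j powr \<beta>"
      using j arrival_mono[of e N j] pos arrival_pos'[OF \<open>1 \<le> N\<close>] \<open>0 < \<beta>\<close> by (intro powr_mono2) auto
    also have "\<dots> \<le> exp (s * arrival e j) / s"
      using arrival_pos'[OF \<open>1 \<le> j\<close>] assms by (intro powr_le_exp_div) auto
    also have "\<dots> \<le> exp (s * arrival e j) / s * exp (t * (arrival e j - (1 + \<delta>) * real j))"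
    proof -
      have "1 \<le> exp (t * (arrival e j - (1 + \<delta>) * real j))"
        using arrival_gt \<open>0 < t\<close> by simp
      then show ?thesis
        using mult_left_mono[of 1 _ "exp (s * arrival e j) / s"] \<open>0 < s\<close> by simp
    qed
    finally show "arrival e N powr \<beta> \<le> \<dots>" .
  qed simp
  also have "\<dots> = real M / s * (exp (- t * (1 + \<delta>) * real j)
                   * (e 0 powr (- (a + \<beta>)) * exp ((s + t) * arrival e j)))"
    using \<open>0 < s\<close> by (simp add: field_simps flip: exp_add)
  finally show ?thesis .
qed

lemma weighted_sum_div_tail_weight_le:
  fixes F :: "real \<Rightarrow> real"
  assumes pos: "\<And>k. e k > 0" and "0 < \<beta>" "\<beta> \<le> 1" "0 < a"
    and F_nonneg: "\<And>x. F x \<ge> 0" and F_le: "\<And>x. x \<ge> 0 \<Longrightarrow> F x \<le> x powr a"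
    and "0 < \<delta>" "0 < t" "0 < s" "s \<le> 1" and "1 \<le> N" "N \<le> M"
  defines "U \<equiv> (\<Sum>i\<in>{1..M}. F (pp_atom e i) * pp_atom e i powr \<beta>)"
  defines "D \<equiv> (\<Sum>i\<in>{N..M}. pp_atom e i powr \<beta>)"
  defines "S \<equiv> (\<Sum>j\<in>{N..M}. real j powr (-\<beta>))"
  shows "U / D \<le> (1 + \<delta>) powr \<beta> / S * U
     + real M / s * (\<Sum>j\<in>{N..M}. exp (- t * (1 + \<delta>) * real j)
                       * (e 0 powr (- (a + \<beta>)) * exp ((s + t) * arrival e j)))"
    (is "_ \<le> ?typical + ?atypical")
proof -
  have "0 \<le> U"
    unfolding U_def using F_nonneg by (intro sum_nonneg) simp
  have "0 < S"
    unfolding S_def using \<open>1 \<le> N\<close> \<open>N \<le> M\<close> by (intro sum_pos) auto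
  have "0 \<le> ?typical" "0 \<le> ?atypical"
    using \<open>0 \<le> U\<close> \<open>0 < S\<close> \<open>0 < s\<close> by (auto intro!: divide_nonneg_pos mult_nonneg_nonneg sum_nonneg)
  show ?thesis
  proof (cases "\<forall>j\<in>{N..M}. arrival e j \<le> (1 + \<delta>) * real j")
    case True
    then have "(1 + \<delta>) powr (-\<beta>) * S \<le> D"
      unfolding S_def D_def using assms by (intro tail_weight_ge) auto
    moreover have "0 < (1 + \<delta>) powr (-\<beta>) * S"
      using \<open>0 < S\<close> \<open>0 < \<delta>\<close> by simp
    ultimately have "U / D \<le> U / ((1 + \<delta>) powr (-\<beta>) * S)"
      using \<open>0 \<le> U\<close> by (intro divide_left_mono) (auto intro!: mult_pos_pos)
    also have "\<dots> = ?typical"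
      using \<open>0 < \<delta>\<close> by (simp add: powr_minus field_simps)
    finally show ?thesis
      using \<open>0 \<le> ?atypical\<close> by linarith
  next
    case False
    then obtain j where j: "j \<in> {N..M}" "arrival e j > (1 + \<delta>) * real j"
      by auto
    then have "U / D \<le> real M / s * (exp (- t * (1 + \<delta>) * real j)
                   * (e 0 powr (- (a + \<beta>)) * exp ((s + t) * arrival e j)))"
      unfolding U_def D_def using assms by (intro weighted_sum_div_tail_weight_le_large_arrival) auto
    also have "\<dots> \<le> ?atypical"
      using j \<open>0 < s\<close> by (intro mult_left_mono member_le_sum) auto
    finally show ?thesis
      using \<open>0 \<le> ?typical\<close> by linarith
  qed
qed

lemma nn_integral_weighted_sum_le:
  fixes a \<beta> c :: real
  assumes "0 < a" "0 < \<beta>" "a + \<beta> < 1" "0 < c"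
  shows "(\<integral>\<^sup>+e. ennreal (\<Sum>i\<in>{1..M}. pp_atom e i powr a * indicator {c..} (pp_atom e i)
                                  * pp_atom e i powr \<beta>) \<partial>Xi_space)
      \<le> ennreal ((1 / c) powr (1 - (a + \<beta>)) / (1 - (a + \<beta>)))"
proof -
  define \<phi> where "\<phi> x = (1 / x) powr a * indicator {c..} (1 / x) * (1 / x) powr \<beta>" for x :: real
  have [measurable]: "\<phi> \<in> borel_measurable borel"
    unfolding \<phi>_def by measurable
  have \<phi>_le: "\<phi> x * indicator {0..} x \<le> indicator {0..1/c} x * x powr (- (a + \<beta>))" for x
  proof (cases "0 < x")
    case True
    have "1 / x \<in> {c..} \<longleftrightarrow> x \<in> {0..1/c}"
      using True \<open>0 < c\<close> by (auto simp: field_simps)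
    then show ?thesis
      using True by (simp add: \<phi>_def indicator_def one_div_powr powr_add[symmetric])
  qed (simp add: \<phi>_def indicator_def)
  have "(\<integral>\<^sup>+e. ennreal (\<Sum>i\<in>{1..M}. pp_atom e i powr a * indicator {c..} (pp_atom e i)
                                  * pp_atom e i powr \<beta>) \<partial>Xi_space)
      = (\<Sum>i\<in>{1..M}. \<integral>\<^sup>+e. ennreal (\<phi> (arrival e i)) \<partial>Xi_space)"
    by (simp add: \<phi>_def pp_atom_eq_arrival nn_integral_sum[symmetric])
  also have "\<dots> \<le> (\<integral>\<^sup>+x\<in>{0..}. ennreal (\<phi> x) \<partial>lborel)"
    by (rule sum_nn_integral_arrival_le) measurable
  also have "\<dots> \<le> (\<integral>\<^sup>+x. ennreal (indicator {0..1/c} x * x powr (- (a + \<beta>))) \<partial>lborel)"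
  proof (intro nn_integral_mono)
    fix x :: real
    show "ennreal (\<phi> x) * indicator {0..} x \<le> ennreal (indicator {0..1/c} x * x powr (- (a + \<beta>)))"
      using \<phi>_le[of x] by (cases "0 \<le> x") (auto intro: ennreal_leI)
  qed
  also have "\<dots> = ennreal ((1 / c) powr (1 - (a + \<beta>)) / (1 - (a + \<beta>)))"
    using assms by (intro nn_integral_powr_Icc_0) auto
  finally show ?thesis .
qed

lemma ennreal_mult_plus_mult_sum:
  fixes c x d :: real and k y :: "nat \<Rightarrow> real"
  assumes "0 \<le> c" "0 \<le> x" "0 \<le> d" "\<And>j. j \<in> J \<Longrightarrow> 0 \<le> k j" "\<And>j. j \<in> J \<Longrightarrow> 0 \<le> y j"
  shows "ennreal (c * x + d * (\<Sum>j\<in>J. k j * y j))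
       = ennreal c * ennreal x + ennreal d * (\<Sum>j\<in>J. ennreal (k j) * ennreal (y j))"
  using assms by (simp add: sum_nonneg ennreal_mult sum_ennreal[symmetric])

lemma nn_integral_typical_plus_atypical_le:
  fixes a \<beta> b \<delta> t s :: real and N M :: nat
  defines "p \<equiv> a + \<beta>" and "u \<equiv> s + t"
  assumes "0 < \<beta>" "0 < a" "p < 1" "0 < s" "u < 1" "1 \<le> N" "N \<le> M"
  defines "S \<equiv> (\<Sum>j\<in>{N..M}. real j powr (-\<beta>))"
  shows "(\<integral>\<^sup>+e. ennreal ((1 + \<delta>) powr \<beta> / S
              * (\<Sum>i\<in>{1..M}. pp_atom e i powr a * indicator {real N powr (-b)..} (pp_atom e i)
                                * pp_atom e i powr \<beta>)
            + real M / s * (\<Sum>j\<in>{N..M}. exp (- t * (1 + \<delta>) * real j)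
                                * (e 0 powr (-p) * exp (u * arrival e j)))) \<partial>Xi_space)
    \<le> ennreal ((1 + \<delta>) powr \<beta> / S * ((real N powr b) powr (1 - p) / (1 - p))
            + real M / s * (\<Sum>j\<in>{N..M}. exp (- t * (1 + \<delta>) * real j)
                                * ((1 / (1 - p) + 1 / (1 - u)) * (1 / (1 - u)) ^ (j - 1))))"
proof -
  define U where "U e = (\<Sum>i\<in>{1..M}. pp_atom e i powr a * indicator {real N powr (-b)..} (pp_atom e i)
                                * pp_atom e i powr \<beta>)" for e
  define X where "X j e = e 0 powr (-p) * exp (u * arrival e j)" for j e
  define c where "c = (1 + \<delta>) powr \<beta> / S"
  define k where "k j = exp (- t * (1 + \<delta>) * real j)" for j :: nat
  define C where "C j = (1 / (1 - p) + 1 / (1 - u)) * (1 / (1 - u)) ^ (j - 1)" for j :: nat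
  have "0 \<le> c" "0 \<le> real M / s" "\<And>e. 0 \<le> U e" "\<And>j e. 0 \<le> X j e" "\<And>j. 0 \<le> C j"
    using assms by (auto simp: c_def S_def U_def X_def C_def intro!: sum_nonneg divide_nonneg_nonneg)
  have [measurable]: "U \<in> borel_measurable Xi_space" "\<And>j. X j \<in> borel_measurable Xi_space"
    unfolding U_def X_def pp_atom_eq_arrival by measurable
  have "(\<integral>\<^sup>+e. ennreal (c * U e + real M / s * (\<Sum>j\<in>{N..M}. k j * X j e)) \<partial>Xi_space)
      = ennreal c * (\<integral>\<^sup>+e. ennreal (U e) \<partial>Xi_space)
        + ennreal (real M / s) * (\<Sum>j\<in>{N..M}. ennreal (k j) * (\<integral>\<^sup>+e. ennreal (X j e) \<partial>Xi_space))"
  proof -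
    have "(\<integral>\<^sup>+e. ennreal (c * U e + real M / s * (\<Sum>j\<in>{N..M}. k j * X j e)) \<partial>Xi_space)
        = (\<integral>\<^sup>+e. ennreal c * ennreal (U e)
             + ennreal (real M / s) * (\<Sum>j\<in>{N..M}. ennreal (k j) * ennreal (X j e)) \<partial>Xi_space)"
      using \<open>0 \<le> c\<close> \<open>0 \<le> real M / s\<close> \<open>\<And>e. 0 \<le> U e\<close> \<open>\<And>j e. 0 \<le> X j e\<close>
      by (intro nn_integral_cong ennreal_mult_plus_mult_sum) (auto simp: k_def)
    then show ?thesis
      by (simp add: nn_integral_add nn_integral_cmult nn_integral_sum)
  qed
  also have "\<dots> \<le> ennreal c * ennreal ((real N powr b) powr (1 - p) / (1 - p))
        + ennreal (real M / s) * (\<Sum>j\<in>{N..M}. ennreal (k j) * ennreal (C j))"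
  proof (intro add_mono mult_left_mono sum_mono)
    show "(\<integral>\<^sup>+e. ennreal (U e) \<partial>Xi_space) \<le> ennreal ((real N powr b) powr (1 - p) / (1 - p))"
      using nn_integral_weighted_sum_le[of a \<beta> "real N powr (-b)" M] assms
      by (simp add: U_def powr_minus_divide)
    show "(\<integral>\<^sup>+e. ennreal (X j e) \<partial>Xi_space) \<le> ennreal (C j)" if "j \<in> {N..M}" for j
      unfolding X_def C_def using that assms by (intro nn_integral_powr_exp_arrival_le) auto
  qed auto
  also have "\<dots> = ennreal (c * ((real N powr b) powr (1 - p) / (1 - p))
        + real M / s * (\<Sum>j\<in>{N..M}. k j * C j))"
    using \<open>0 \<le> c\<close> \<open>0 \<le> real M / s\<close> \<open>\<And>j. 0 \<le> C j\<close> \<open>p < 1\<close>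
    by (subst ennreal_mult_plus_mult_sum) (auto simp: k_def)
  finally show ?thesis
    by (simp add: U_def X_def c_def k_def C_def)
qed

text \<open>\<open>\<delta>\<close> is the tolerance in the typical behaviour \<open>\<Gamma>\<^sub>j \<le> (1 + \<delta>) j\<close>,
  \<open>s\<close> and \<open>t\<close> are the exponential-moment parameters for the atypical one.\<close>

definition expect_bound :: "real \<Rightarrow> real \<Rightarrow> real \<Rightarrow> real \<Rightarrow> real \<Rightarrow> real \<Rightarrow> real \<Rightarrow> nat \<Rightarrow> real" where
  "expect_bound \<gamma> \<beta> a b \<delta> t s N =
     (let M = nat \<lceil>real N powr \<gamma>\<rceil>; p = a + \<beta>; u = s + t in
      real N * ((1 + \<delta>) powr \<beta> / (\<Sum>j\<in>{N..M}. real j powr (-\<beta>))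
                  * ((real N powr b) powr (1 - p) / (1 - p))
                + real M / s * (\<Sum>j\<in>{N..M}. exp (- t * (1 + \<delta>) * real j)
                  * ((1 / (1 - p) + 1 / (1 - u)) * (1 / (1 - u)) ^ (j - 1)))))"

lemma total_expect_sample_le:
  fixes \<gamma> \<beta> a b \<delta> t s :: real and N :: nat
  defines "M \<equiv> nat \<lceil>real N powr \<gamma>\<rceil>"
  assumes "0 < \<beta>" "\<beta> < 1" "0 < a" "a + \<beta> < 1" "0 \<le> b" "1 \<le> N" "N \<le> M"
    and "0 < \<delta>" "0 < t" "0 < s" "s \<le> 1" "s + t < 1"
    and samp: "samp = I_sample \<gamma> \<beta> \<or> samp = J_sample \<gamma> \<beta>"
  shows "total_expect (samp N) (\<lambda>x. x powr a * indicator {real N powr (-b)..} x)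
      \<le> ennreal (expect_bound \<gamma> \<beta> a b \<delta> t s N)"
proof -
  define F where "F x = x powr a * indicator {real N powr (-b)..} x" for x :: real
  define U where "U e = (\<Sum>i\<in>{1..M}. F (pp_atom e i) * pp_atom e i powr \<beta>)" for e
  define D where "D e = (\<Sum>j\<in>{N..M}. pp_atom e j powr \<beta>)" for e
  define B where "B e = (1 + \<delta>) powr \<beta> / (\<Sum>j\<in>{N..M}. real j powr (-\<beta>)) * U e
      + real M / s * (\<Sum>j\<in>{N..M}. exp (- t * (1 + \<delta>) * real j)
                       * (e 0 powr (- (a + \<beta>)) * exp ((s + t) * arrival e j)))" for e
  have "\<And>x. 0 \<le> F x" "N \<le> nat \<lceil>real N powr \<gamma>\<rceil>"
    using \<open>N \<le> M\<close> by (auto simp: M_def F_def)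
  then have "(\<integral>\<^sup>+ks. ennreal (\<Sum>k\<leftarrow>ks. F (pp_atom e k)) \<partial>measure_pmf (samp N e))
      \<le> ennreal (real N * U e / D e)" if "\<And>k. e k > 0" for e
    unfolding U_def D_def M_def using samp nn_integral_sample_le that \<open>1 \<le> N\<close> \<open>0 < \<beta>\<close> by meson
  also have "ennreal (real N * U e / D e) \<le> ennreal (real N) * ennreal (B e)" if "\<And>k. e k > 0" for e
  proof -
    have "U e / D e \<le> B e"
      unfolding U_def D_def B_def F_def using assms that
      by (intro weighted_sum_div_tail_weight_le) (auto simp: indicator_def)
    then have "real N * (U e / D e) \<le> real N * B e"
      by (rule mult_left_mono) simp
    then show ?thesis
      by (simp add: ennreal_mult'[symmetric] ennreal_leI)
  qed
  finally have "total_expect (samp N) F \<le> (\<integral>\<^sup>+e. ennreal (real N) * ennreal (B e) \<partial>Xi_space)"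
    unfolding total_expect_def using AE_Xi_pos
    by (intro nn_integral_mono_AE) (auto elim!: eventually_mono)
  also have "\<dots> = ennreal (real N) * (\<integral>\<^sup>+e. ennreal (B e) \<partial>Xi_space)"
    unfolding B_def U_def F_def pp_atom_eq_arrival by (intro nn_integral_cmult) measurable
  also have "\<dots> \<le> ennreal (real N) * ennreal ((1 + \<delta>) powr \<beta> / (\<Sum>j\<in>{N..M}. real j powr (-\<beta>))
                  * ((real N powr b) powr (1 - (a + \<beta>)) / (1 - (a + \<beta>)))
                + real M / s * (\<Sum>j\<in>{N..M}. exp (- t * (1 + \<delta>) * real j)
                  * ((1 / (1 - (a + \<beta>)) + 1 / (1 - (s + t))) * (1 / (1 - (s + t))) ^ (j - 1))))"
    unfolding B_def U_def F_def using assms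
    by (intro mult_left_mono nn_integral_typical_plus_atypical_le) auto
  also have "\<dots> = ennreal (expect_bound \<gamma> \<beta> a b \<delta> t s N)"
    unfolding expect_bound_def Let_def M_def by (simp add: ennreal_mult'[symmetric])
  finally show ?thesis
    by (simp add: F_def[abs_def])
qed

section \<open>Asymptotics\<close>

lemma powr_Suc_diff_le:
  fixes \<beta> :: real
  assumes "0 < \<beta>" "\<beta> < 1" "1 \<le> j"
  shows "real (Suc j) powr (1 - \<beta>) - real j powr (1 - \<beta>) \<le> (1 - \<beta>) * real j powr (- \<beta>)"
proof -
  have "\<exists>z. real j < z \<and> z < real (Suc j) \<and>
     real (Suc j) powr (1 - \<beta>) - real j powr (1 - \<beta>) = (real (Suc j) - real j) * ((1 - \<beta>) * z powr (1 - \<beta> - 1))"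
  proof (rule MVT2)
    fix x assume "real j \<le> x"
    then have "x > 0" using assms by simp
    then show "((\<lambda>z. z powr (1 - \<beta>)) has_real_derivative (1 - \<beta>) * x powr (1 - \<beta> - 1)) (at x)"
      by (rule has_real_derivative_powr)
  qed simp
  then obtain z where z: "real j < z" "z < real (Suc j)"
    "real (Suc j) powr (1 - \<beta>) - real j powr (1 - \<beta>) = (1 - \<beta>) * z powr (- \<beta>)"
    by auto
  have "z powr (-\<beta>) \<le> real j powr (-\<beta>)"
    using z assms by (intro powr_mono2') auto
  then show ?thesis
    using z assms by (simp add: mult_left_mono)
qed

lemma sum_powr_tail_ge:
  fixes \<beta> :: real
  assumes "0 < \<beta>" "\<beta> < 1" "1 \<le> N" "N \<le> M"
  shows "real (Suc M) powr (1 - \<beta>) - real N powr (1 - \<beta>) \<le> (1 - \<beta>) * (\<Sum>j\<in>{N..M}. real j powr (-\<beta>))"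
proof -
  have "real (Suc M) powr (1 - \<beta>) - real N powr (1 - \<beta>)
      = (\<Sum>j\<in>{N..M}. real (Suc j) powr (1 - \<beta>) - real j powr (1 - \<beta>))"
    using sum_Suc_diff[of N M "\<lambda>j. real j powr (1 - \<beta>)"] assms by simp
  also have "\<dots> \<le> (\<Sum>j\<in>{N..M}. (1 - \<beta>) * real j powr (- \<beta>))"
    using assms by (intro sum_mono powr_Suc_diff_le) auto
  finally show ?thesis
    by (simp add: sum_distrib_left)
qed

text \<open>This is where the constant \<open>1 - \<beta>\<close> of the theorem comes from.\<close>

lemma powr_div_sum_powr_tail_le:
  fixes \<gamma> \<beta> :: real
  assumes "1 < \<gamma>" "0 < \<beta>" "\<beta> < 1" "2 \<le> N"
  defines "M \<equiv> nat \<lceil>real N powr \<gamma>\<rceil>"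
  shows "real N powr (\<gamma> * (1 - \<beta>)) / (\<Sum>j\<in>{N..M}. real j powr (-\<beta>))
      \<le> (1 - \<beta>) / (1 - real N powr ((1 - \<beta>) * (1 - \<gamma>)))"
proof -
  define g where "g = \<gamma> * (1 - \<beta>)"
  define S where "S = (\<Sum>j\<in>{N..M}. real j powr (-\<beta>))"
  have "real N powr 1 \<le> real N powr \<gamma>"
    using assms by (intro powr_mono) auto
  then have "N \<le> M"
    unfolding M_def by simp linarith
  have "real N powr g = (real N powr \<gamma>) powr (1 - \<beta>)"
    by (simp add: g_def powr_powr)
  also have "\<dots> \<le> real (Suc M) powr (1 - \<beta>)"
    using assms by (intro powr_mono2) (auto simp: M_def, linarith)
  finally have "real N powr g - real N powr (1 - \<beta>) \<le> (1 - \<beta>) * S"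
    using sum_powr_tail_ge[of \<beta> N M] \<open>N \<le> M\<close> assms by (simp add: S_def)
  moreover have "real N powr g - real N powr (1 - \<beta>) = real N powr g * (1 - real N powr ((1 - \<beta>) * (1 - \<gamma>)))"
    using assms by (simp add: g_def powr_add[symmetric] algebra_simps)
  moreover have "real N powr ((1 - \<beta>) * (1 - \<gamma>)) < 1"
    using assms by (intro powr_less_one) (auto simp: mult_pos_neg)
  moreover have "0 < S"
    unfolding S_def using \<open>N \<le> M\<close> assms by (intro sum_pos) auto
  ultimately show ?thesis
    using assms by (simp add: g_def S_def divide_simps mult.commute)
qed

lemma sum_power_tail_le:
  fixes \<rho> :: real
  assumes "0 < \<rho>" "\<rho> < 1"
  shows "(\<Sum>j\<in>{N..M}. \<rho> ^ j) \<le> \<rho> ^ N / (1 - \<rho>)"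
  using assms by (auto simp: sum_gp divide_right_mono)

text \<open>The factor \<open>exp (- t (1 + \<delta>)) / (1 - s - t)\<close> is below \<open>1\<close> as soon as \<open>s\<close> is of smaller
  order than \<open>t \<delta>\<close>.\<close>

lemma exists_chernoff_parameters:
  fixes \<delta> :: real
  assumes "0 < \<delta>" "\<delta> \<le> 1"
  shows "\<exists>t s. 0 < t \<and> 0 < s \<and> s \<le> 1 \<and> s + t < 1 \<and> exp (- t * (1 + \<delta>)) / (1 - (s + t)) < 1"
proof (intro exI conjI)
  define t where "t = \<delta> / 4"
  define s where "s = \<delta>\<^sup>2 / 16"
  have "\<delta>\<^sup>2 \<le> \<delta>"
    using assms by (simp add: power2_eq_square mult_le_cancel_left1)
  then show "0 < t" "0 < s" "s \<le> 1" "s + t < 1"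
    using assms by (auto simp: s_def t_def)
  have "(1 + t * (1 + \<delta>)) * (1 - (s + t)) = 1 + \<delta>\<^sup>2 * ((8 - 5 * \<delta> - \<delta>\<^sup>2) / 64)"
    by (simp add: s_def t_def power2_eq_square field_simps)
  also have "\<dots> > 1"
    using assms \<open>\<delta>\<^sup>2 \<le> \<delta>\<close> by (intro less_add_same_cancel1[THEN iffD2] mult_pos_pos) auto
  finally have "1 < (1 + t * (1 + \<delta>)) * (1 - (s + t))" .
  also have "\<dots> \<le> exp (t * (1 + \<delta>)) * (1 - (s + t))"
    using \<open>s + t < 1\<close> exp_ge_add_one_self[of "t * (1 + \<delta>)"] by (intro mult_right_mono) auto
  finally have "1 < exp (t * (1 + \<delta>)) * (1 - (s + t))" .
  moreover have "exp (- t * (1 + \<delta>)) / (1 - (s + t)) = 1 / (exp (t * (1 + \<delta>)) * (1 - (s + t)))"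
    by (simp add: exp_minus divide_inverse)
  ultimately show "exp (- t * (1 + \<delta>)) / (1 - (s + t)) < 1"
    by simp
qed

lemma sum_exp_mult_power_eq:
  fixes \<tau> C u :: real
  assumes "u < 1" "1 \<le> N"
  shows "(\<Sum>j\<in>{N..M}. exp (\<tau> * real j) * (C * (1 / (1 - u)) ^ (j - 1)))
      = C * (1 - u) * (\<Sum>j\<in>{N..M}. (exp \<tau> / (1 - u)) ^ j)"
  unfolding sum_distrib_left
proof (intro sum.cong refl)
  fix j assume "j \<in> {N..M}"
  then obtain i where i: "j = Suc i" using \<open>1 \<le> N\<close> by (cases j) auto
  have "exp (\<tau> * real j) = exp \<tau> ^ j"
    by (subst exp_of_nat_mult[symmetric]) (simp add: algebra_simps)
  then show "exp (\<tau> * real j) * (C * (1 / (1 - u)) ^ (j - 1)) = C * (1 - u) * (exp \<tau> / (1 - u)) ^ j"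
    using \<open>u < 1\<close> unfolding i by (simp add: field_simps)
qed

lemma scaled_typical_term_le:
  fixes \<gamma> \<beta> b p \<delta> :: real and N :: nat
  assumes "1 < \<gamma>" "0 < \<beta>" "\<beta> < 1" "p < 1" "2 \<le> N"
  defines "M \<equiv> nat \<lceil>real N powr \<gamma>\<rceil>"
  shows "real N powr (\<gamma> * (1 - \<beta>) - 1 - b * (1 - p))
           * (real N * ((1 + \<delta>) powr \<beta> / (\<Sum>j\<in>{N..M}. real j powr (-\<beta>))
                         * ((real N powr b) powr (1 - p) / (1 - p))))
      \<le> (1 + \<delta>) powr \<beta> * (1 - \<beta>) / (1 - p) / (1 - real N powr ((1 - \<beta>) * (1 - \<gamma>)))"
proof -
  define e where "e = \<gamma> * (1 - \<beta>) - 1 - b * (1 - p)"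
  define S where "S = (\<Sum>j\<in>{N..M}. real j powr (-\<beta>))"
  have "real N powr e * real N * (real N powr b) powr (1 - p) = real N powr (e + 1 + b * (1 - p))"
    using \<open>2 \<le> N\<close> by (simp add: powr_add powr_powr)
  also have "e + 1 + b * (1 - p) = \<gamma> * (1 - \<beta>)"
    by (simp add: e_def)
  finally have "real N powr e * (real N * ((1 + \<delta>) powr \<beta> / S * ((real N powr b) powr (1 - p) / (1 - p))))
      = (1 + \<delta>) powr \<beta> / (1 - p) * (real N powr (\<gamma> * (1 - \<beta>)) / S)"
    by (simp add: field_simps)
  also have "\<dots> \<le> (1 + \<delta>) powr \<beta> / (1 - p) * ((1 - \<beta>) / (1 - real N powr ((1 - \<beta>) * (1 - \<gamma>))))"
    unfolding S_def M_def using assms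
    by (intro mult_left_mono powr_div_sum_powr_tail_le) auto
  finally show ?thesis
    by (simp add: e_def S_def)
qed

lemma scaled_atypical_term_le:
  fixes \<gamma> \<beta> b p s u C \<rho> :: real and N :: nat
  assumes "1 < \<gamma>" "0 \<le> b" "p < 1" "1 \<le> N" "0 < s" "u < 1" "0 \<le> C" "0 < \<rho>" "\<rho> < 1"
  defines "M \<equiv> nat \<lceil>real N powr \<gamma>\<rceil>"
  shows "real N powr (\<gamma> * (1 - \<beta>) - 1 - b * (1 - p))
           * (real N * (real M / s * (C * (1 - u) * (\<Sum>j\<in>{N..M}. \<rho> ^ j))))
      \<le> 2 * C * (1 - u) / (s * (1 - \<rho>)) * (real N powr (\<gamma> * (1 - \<beta>) + \<gamma>) * \<rho> ^ N)"
proof -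
  define e where "e = \<gamma> * (1 - \<beta>) - 1 - b * (1 - p)"
  define g where "g = \<gamma> * (1 - \<beta>)"
  have "1 \<le> real N powr \<gamma>"
    using assms by (simp add: ge_one_powr_ge_zero)
  then have M_le: "real M \<le> 2 * real N powr \<gamma>"
    unfolding M_def by linarith
  have "real N powr e * real N = real N powr (e + 1)"
    using \<open>1 \<le> N\<close> by (simp add: powr_add)
  also have "\<dots> \<le> real N powr g"
    using assms by (intro powr_mono) (auto simp: e_def g_def)
  finally have "real N powr e * real N \<le> real N powr g" .
  have "real N powr e * (real N * (real M / s * (C * (1 - u) * (\<Sum>j\<in>{N..M}. \<rho> ^ j))))
      = (real N powr e * real N) * real M * (C * (1 - u) / s) * (\<Sum>j\<in>{N..M}. \<rho> ^ j)"
    by (simp add: field_simps)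
  also have "\<dots> \<le> real N powr g * (2 * real N powr \<gamma>) * (C * (1 - u) / s) * (\<rho> ^ N / (1 - \<rho>))"
    using \<open>real N powr e * real N \<le> real N powr g\<close> M_le sum_power_tail_le[OF \<open>0 < \<rho>\<close> \<open>\<rho> < 1\<close>, of N M]
      \<open>0 \<le> C\<close> \<open>u < 1\<close> \<open>0 < s\<close> \<open>0 < \<rho>\<close>
    by (intro mult_mono) (auto intro!: sum_nonneg)
  also have "\<dots> = 2 * C * (1 - u) / (s * (1 - \<rho>)) * (real N powr g * real N powr \<gamma> * \<rho> ^ N)"
    using \<open>0 < s\<close> \<open>\<rho> < 1\<close> by (simp add: field_simps)
  also have "real N powr g * real N powr \<gamma> = real N powr (\<gamma> * (1 - \<beta>) + \<gamma>)"
    by (simp add: g_def powr_add)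
  finally show ?thesis
    by (simp add: e_def)
qed

lemma scaled_expect_bound_le:
  fixes \<gamma> \<beta> a b \<delta> t s :: real and N :: nat
  defines "p \<equiv> a + \<beta>" and "u \<equiv> s + t"
  defines "\<rho> \<equiv> exp (- t * (1 + \<delta>)) / (1 - u)"
  assumes "1 < \<gamma>" "0 < \<beta>" "\<beta> < 1" "0 < a" "p < 1" "0 \<le> b" "2 \<le> N" "0 < s" "u < 1" "\<rho> < 1"
  shows "real N powr (\<gamma> * (1 - \<beta>) - 1 - b * (1 - p)) * expect_bound \<gamma> \<beta> a b \<delta> t s N
      \<le> (1 + \<delta>) powr \<beta> * (1 - \<beta>) / (1 - p) / (1 - real N powr ((1 - \<beta>) * (1 - \<gamma>)))
        + 2 * (1 / (1 - p) + 1 / (1 - u)) * (1 - u) / (s * (1 - \<rho>)) * (real N powr (\<gamma> * (1 - \<beta>) + \<gamma>) * \<rho> ^ N)"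
proof -
  define M where "M = nat \<lceil>real N powr \<gamma>\<rceil>"
  define C where "C = 1 / (1 - p) + 1 / (1 - u)"
  have "0 < \<rho>" "0 \<le> C"
    using assms by (auto simp: \<rho>_def C_def)
  have "(\<Sum>j\<in>{N..M}. exp (- t * (1 + \<delta>) * real j) * (C * (1 / (1 - u)) ^ (j - 1)))
      = C * (1 - u) * (\<Sum>j\<in>{N..M}. \<rho> ^ j)"
    unfolding \<rho>_def using assms by (intro sum_exp_mult_power_eq) auto
  then have "expect_bound \<gamma> \<beta> a b \<delta> t s N
      = real N * ((1 + \<delta>) powr \<beta> / (\<Sum>j\<in>{N..M}. real j powr (-\<beta>)) * ((real N powr b) powr (1 - p) / (1 - p)))
        + real N * (real M / s * (C * (1 - u) * (\<Sum>j\<in>{N..M}. \<rho> ^ j)))"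
    by (simp add: expect_bound_def Let_def M_def C_def p_def u_def distrib_left)
  then show ?thesis
    using scaled_typical_term_le[of \<gamma> \<beta> p N b \<delta>] scaled_atypical_term_le[of \<gamma> b p N s u C \<rho> \<beta>]
      assms \<open>0 < \<rho>\<close> \<open>0 \<le> C\<close>
    by (simp add: M_def C_def distrib_left add_mono)
qed

lemma expect_bound_nonneg:
  assumes "0 < s" "s + t < 1" "a + \<beta> < 1"
  shows "0 \<le> expect_bound \<gamma> \<beta> a b \<delta> t s N"
  using assms unfolding expect_bound_def Let_def
  by (intro mult_nonneg_nonneg add_nonneg_nonneg divide_nonneg_nonneg sum_nonneg)
     (auto intro: less_le_trans[OF _ powr_ge_zero])

lemma limsup_scaled_le:
  fixes T :: "nat \<Rightarrow> ennreal" and c B h :: "nat \<Rightarrow> real"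
  assumes "\<And>N. N\<^sub>0 \<le> N \<Longrightarrow> 0 \<le> c N" "\<And>N. N\<^sub>0 \<le> N \<Longrightarrow> 0 \<le> B N"
    and "\<And>N. N\<^sub>0 \<le> N \<Longrightarrow> T N \<le> ennreal (B N)" "\<And>N. N\<^sub>0 \<le> N \<Longrightarrow> c N * B N \<le> h N"
    and "h \<longlonglongrightarrow> K"
  shows "limsup (\<lambda>N. ereal (c N) * enn2ereal (T N)) \<le> ereal K"
proof -
  have "\<forall>\<^sub>F N in sequentially. ereal (c N) * enn2ereal (T N) \<le> ereal (h N)"
    using eventually_ge_at_top[of N\<^sub>0]
  proof eventually_elim
    case (elim N)
    then have "enn2ereal (T N) \<le> ereal (B N)"
      using assms(2,3) by (metis enn2ereal_ennreal less_eq_ennreal.rep_eq)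
    then have "ereal (c N) * enn2ereal (T N) \<le> ereal (c N) * ereal (B N)"
      using elim assms(1) by (intro ereal_mult_left_mono) auto
    with elim assms(4) show ?case
      by (simp add: order.trans)
  qed
  then have "limsup (\<lambda>N. ereal (c N) * enn2ereal (T N)) \<le> limsup (\<lambda>N. ereal (h N))"
    by (rule Limsup_mono)
  also have "\<dots> = ereal K"
    using assms(5) by (intro lim_imp_Limsup) auto
  finally show ?thesis .
qed

lemma tendsto_powr_bound:
  fixes q r \<rho> K L :: real
  assumes "q < 0" "0 < \<rho>" "\<rho> < 1"
  shows "(\<lambda>N::nat. K / (1 - real N powr q) + L * (real N powr r * \<rho> ^ N)) \<longlonglongrightarrow> K"
proof -
  have "(\<lambda>N::nat. real N powr q) \<longlonglongrightarrow> 0" "(\<lambda>N::nat. real N powr r * \<rho> ^ N) \<longlonglongrightarrow> 0"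
    using assms by real_asymp+
  then have "(\<lambda>N::nat. K / (1 - real N powr q) + L * (real N powr r * \<rho> ^ N)) \<longlonglongrightarrow> K / (1 - 0) + L * 0"
    by (intro tendsto_intros) auto
  then show ?thesis by simp
qed

lemma limsup_total_expect_le:
  fixes \<gamma> \<beta> a b \<delta> :: real
  assumes "1 < \<gamma>" "0 < \<beta>" "\<beta> < 1" "0 < a" "0 \<le> b" "a + \<beta> < 1" "0 < \<delta>" "\<delta> \<le> 1"
    and samp: "samp = I_sample \<gamma> \<beta> \<or> samp = J_sample \<gamma> \<beta>"
  shows "limsup (\<lambda>N::nat. ereal (real N powr (\<gamma> * (1 - \<beta>) - 1 - b * (1 - (a + \<beta>)))) *
            enn2ereal (total_expect (samp N) (\<lambda>x. x powr a * indicator {real N powr (- b)..} x)))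
      \<le> ereal ((1 + \<delta>) powr \<beta> * (1 - \<beta>) / (1 - (a + \<beta>)))"
proof -
  obtain t s where ts: "0 < t" "0 < s" "s \<le> 1" "s + t < 1" "exp (- t * (1 + \<delta>)) / (1 - (s + t)) < 1"
    using exists_chernoff_parameters[OF \<open>0 < \<delta>\<close> \<open>\<delta> \<le> 1\<close>] by blast
  define \<rho> where "\<rho> = exp (- t * (1 + \<delta>)) / (1 - (s + t))"
  have "0 < \<rho>" "\<rho> < 1"
    using ts by (simp_all add: \<rho>_def)
  have N_le: "N \<le> nat \<lceil>real N powr \<gamma>\<rceil>" if "1 \<le> N" for N :: nat
  proof -
    have "real N powr 1 \<le> real N powr \<gamma>"
      using that assms by (intro powr_mono) auto
    then show ?thesis using that by simp linarith
  qed
  define h where "h N = (1 + \<delta>) powr \<beta> * (1 - \<beta>) / (1 - (a + \<beta>)) / (1 - real N powr ((1 - \<beta>) * (1 - \<gamma>)))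
      + 2 * (1 / (1 - (a + \<beta>)) + 1 / (1 - (s + t))) * (1 - (s + t)) / (s * (1 - \<rho>))
        * (real N powr (\<gamma> * (1 - \<beta>) + \<gamma>) * \<rho> ^ N)" for N :: nat
  have "h \<longlonglongrightarrow> (1 + \<delta>) powr \<beta> * (1 - \<beta>) / (1 - (a + \<beta>))"
    unfolding h_def using assms \<open>0 < \<rho>\<close> \<open>\<rho> < 1\<close> by (intro tendsto_powr_bound) (auto simp: mult_pos_neg)
  moreover have "real N powr (\<gamma> * (1 - \<beta>) - 1 - b * (1 - (a + \<beta>))) * expect_bound \<gamma> \<beta> a b \<delta> t s N \<le> h N"
    if "2 \<le> N" for N
    unfolding h_def \<rho>_def using assms ts that by (intro scaled_expect_bound_le) auto
  moreover have "total_expect (samp N) (\<lambda>x. x powr a * indicator {real N powr (- b)..} x)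
      \<le> ennreal (expect_bound \<gamma> \<beta> a b \<delta> t s N)" if "2 \<le> N" for N
    using assms ts that N_le[of N] by (intro total_expect_sample_le) auto
  ultimately show ?thesis
    using ts \<open>a + \<beta> < 1\<close>
    by (intro limsup_scaled_le[where N\<^sub>0 = 2 and B = "expect_bound \<gamma> \<beta> a b \<delta> t s"])
       (auto intro: expect_bound_nonneg)
qed

lemma ereal_le_of_le_powr_factor:
  fixes x :: ereal and \<beta> c :: real
  assumes "\<And>\<delta>. 0 < \<delta> \<Longrightarrow> \<delta> < 1 \<Longrightarrow> x \<le> ereal ((1 + \<delta>) powr \<beta> * c)"
  shows "x \<le> ereal c"
proof (rule tendsto_lowerbound)
  have "((\<lambda>\<delta>. (1 + \<delta>) powr \<beta> * c) \<longlongrightarrow> (1 + 0) powr \<beta> * c) (at_right 0)"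
    by (intro tendsto_intros) auto
  then show "((\<lambda>\<delta>. ereal ((1 + \<delta>) powr \<beta> * c)) \<longlongrightarrow> ereal c) (at_right (0::real))"
    by (intro tendsto_ereal) simp
  show "\<forall>\<^sub>F \<delta> in at_right 0. x \<le> ereal ((1 + \<delta>) powr \<beta> * c)"
    unfolding eventually_at_right_field using assms by (intro exI[of _ 1]) auto
qed simp

theorem corollary4p5:
  fixes \<gamma> \<beta> chi a b A :: real
  assumes "\<gamma> > 1" and "0 < \<beta>" and "\<beta> < 1"
    and "chi = (1 - \<gamma> * (1 - \<beta>)) / \<beta>"
    and "a > 0" and "b \<ge> 0"
    and "A = a + \<beta> - 1" and "A < 0"
  shows "limsup (\<lambda>N::nat. ereal (real N powr (- chi * \<beta> + b * A)) *
            enn2ereal (total_expect (I_sample \<gamma> \<beta> N)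
              (\<lambda>x. x powr a * indicator {real N powr (- b)..} x)))
           \<le> ereal ((1 - \<beta>) * (1 / \<bar>A\<bar>))
    \<and> limsup (\<lambda>N::nat. ereal (real N powr (- chi * \<beta> + b * A)) *
            enn2ereal (total_expect (J_sample \<gamma> \<beta> N)
              (\<lambda>x. x powr a * indicator {real N powr (- b)..} x)))
           \<le> ereal ((1 - \<beta>) * (1 / \<bar>A\<bar>))"
proof -
  have exponent: "- chi * \<beta> + b * A = \<gamma> * (1 - \<beta>) - 1 - b * (1 - (a + \<beta>))"
    unfolding assms(4,7) using \<open>0 < \<beta>\<close> by (simp add: field_simps)
  have "(1 - \<beta>) * (1 / \<bar>A\<bar>) = (1 - \<beta>) / (1 - (a + \<beta>))"
    using assms by simp
  moreover have "limsup (\<lambda>N::nat. ereal (real N powr (\<gamma> * (1 - \<beta>) - 1 - b * (1 - (a + \<beta>)))) *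
        enn2ereal (total_expect (samp N) (\<lambda>x. x powr a * indicator {real N powr (- b)..} x)))
      \<le> ereal ((1 - \<beta>) / (1 - (a + \<beta>)))" if "samp = I_sample \<gamma> \<beta> \<or> samp = J_sample \<gamma> \<beta>" for samp
  proof (rule ereal_le_of_le_powr_factor)
    fix \<delta> :: real assume "0 < \<delta>" "\<delta> < 1"
    then show "limsup (\<lambda>N::nat. ereal (real N powr (\<gamma> * (1 - \<beta>) - 1 - b * (1 - (a + \<beta>)))) *
        enn2ereal (total_expect (samp N) (\<lambda>x. x powr a * indicator {real N powr (- b)..} x)))
      \<le> ereal ((1 + \<delta>) powr \<beta> * ((1 - \<beta>) / (1 - (a + \<beta>))))"
      using limsup_total_expect_le[of \<gamma> \<beta> a b \<delta> samp] assms that by simp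
  qed
  ultimately show ?thesis
    unfolding exponent by auto
qed

end
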